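(* For every positive integer $n$, $|\mathrm{Sort}_n(\mathrm{SC}_{\underline{32}1})|=M_n$, where $M_n$ is the $n$-th Motzkin number.
   Context: $M_n$ is the number of lattice paths from $(0,0)$ to $(n,0)$ with steps $(1,1)$, $(1,-1)$, $(1,0)$ that never go below the $x$-axis ($M_1=1,M_2=2,M_3=4,\dots$). $\mathfrak S_n$ is the set of permutations of $\{1,\dots,n\}$. A vincular pattern is a permutation with some entries underlined; a sequence contains it if it has a subsequence with the same relative order in which entries corresponding to adjacent underlined entries occupy consecutive positions. An occurrence of $\underline{32}1$ is $a_j a_{j+1} a_l$ with $l>j+1$ and $a_l<a_{j+1}<a_j$. For a pattern $\sigma$, the map $\mathrm{SC}_\sigma$ acts on $\tau$: read entries left to right; when the next entry $x$ is read, if pushing $x$ yields a stack whose entries read top to bottom (stack adjacency = consecutive positions) avoid $\sigma$, push $x$; otherwise pop the top stack entry to the output and repeat. At the end pop all remaining entries; the output is $\mathrm{SC}_\sigma(\tau)$. West's stack-sorting map is $s=\mathrm{SC}_{21}$. $\mathrm{Sort}_n(\mathrm{SC}_\sigma)=\{\tau\in\mathfrak S_n : s(\mathrm{SC}_\sigma(\tau))=12\cdots n\}$. *)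

theory Defs
  imports "HOL-Combinatorics.Multiset_Permutations"
begin

text \<open>Stacks are lists with the top entry first, so a stack read top to bottom
is the list itself. The generic stack map SC takes as parameter the predicate
"the word contains the pattern sigma".\<close>

function sc_aux :: "(nat list \<Rightarrow> bool) \<Rightarrow> nat list \<Rightarrow> nat list \<Rightarrow> nat list" where
  "sc_aux contains [] st = st"
| "sc_aux contains (x # xs) [] = sc_aux contains xs [x]"
| "sc_aux contains (x # xs) (y # st) =
     (if \<not> contains (x # y # st) then sc_aux contains xs (x # y # st)
      else y # sc_aux contains (x # xs) st)"
  by pat_completeness auto
termination
  by (relation "measure (\<lambda>(c, xs, st). 2 * length xs + length st)") auto

definition SC :: "(nat list \<Rightarrow> bool) \<Rightarrow> nat list \<Rightarrow> nat list" where
  "SC contains \<tau> = sc_aux contains \<tau> []"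

definition contains_21 :: "nat list \<Rightarrow> bool" where
  "contains_21 w \<longleftrightarrow> (\<exists>i j. i < j \<and> j < length w \<and> w ! j < w ! i)"

definition contains_32_1 :: "nat list \<Rightarrow> bool" where
  "contains_32_1 w \<longleftrightarrow>
     (\<exists>j l. j + 1 < l \<and> l < length w \<and> w ! l < w ! (j + 1) \<and> w ! (j + 1) < w ! j)"

definition west_s :: "nat list \<Rightarrow> nat list" where
  "west_s = SC contains_21"

definition Sort_set :: "nat \<Rightarrow> (nat list \<Rightarrow> bool) \<Rightarrow> nat list set" where
  "Sort_set n contains =
     {\<tau> \<in> permutations_of_set {1..n}. west_s (SC contains \<tau>) = [1..<n+1]}"

definition motzkin_paths :: "nat \<Rightarrow> int list set" where
  "motzkin_paths n = {p. length p = n \<and> set p \<subseteq> {-1, 0, 1} \<and>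
      (\<forall>k \<le> n. sum_list (take k p) \<ge> 0) \<and> sum_list p = 0}"

definition motzkin :: "nat \<Rightarrow> nat" where
  "motzkin n = card (motzkin_paths n)"

end

theory Submission
  imports Defs
begin

text \<open>Write a permutation as \<open>L n R\<close> with \<open>n\<close> its maximum. If \<open>SC_32_1\<close> pops some
  entry of \<open>L n\<close>, that entry lies above a smaller one which stays on the stack below \<open>n\<close>, and
  the output contains 231. Otherwise the output is \<open>SC(R) n rev(L)\<close>. As West's map sorts exactly
  the 231-avoiding permutations, the permutation is sortable iff \<open>L\<close> lies above \<open>R\<close>, \<open>R\<close> is
  sortable, \<open>n rev(L)\<close> avoids 32_1 and \<open>rev(L)\<close> avoids 231. Such words \<open>rev(L)\<close> are
  their minimum followed by a permutation avoiding 32_1 and 231, and these permutations split at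
  their maximum in the same way. So both families are counted by the recursion
  \<open>M(m+1) = \<Sum>k\<le>m. M(k) M'(m-k)\<close>, \<open>M'(0) = 1\<close>, \<open>M'(j+1) = M(j)\<close>, which is the first-return
  decomposition of Motzkin paths.\<close>

section \<open>Runs of a pattern-avoiding stack\<close>

function stack_run :: "(nat list \<Rightarrow> bool) \<Rightarrow> nat list \<Rightarrow> nat list \<Rightarrow> nat list \<times> nat list" where
  "stack_run c [] st = ([], st)"
| "stack_run c (x # xs) [] = stack_run c xs [x]"
| "stack_run c (x # xs) (y # st) =
     (if \<not> c (x # y # st) then stack_run c xs (x # y # st)
      else let r = stack_run c (x # xs) st in (y # fst r, snd r))"
  by pat_completeness auto
termination
  by (relation "measure (\<lambda>(c, xs, st). 2 * length xs + length st)") auto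

lemma sc_aux_eq_stack_run: "sc_aux c xs st = fst (stack_run c xs st) @ snd (stack_run c xs st)"
  by (induction c xs st rule: stack_run.induct) (auto simp: Let_def)

lemma stack_run_append:
  "stack_run c (xs @ ys) st =
    (let r = stack_run c xs st; r' = stack_run c ys (snd r) in (fst r @ fst r', snd r'))"
  by (induction c xs st rule: stack_run.induct) (auto simp: Let_def)

lemma mset_stack_run: "mset (fst (stack_run c xs st)) + mset (snd (stack_run c xs st)) = mset xs + mset st"
  by (induction c xs st rule: stack_run.induct) (auto simp: Let_def)

lemma set_snd_stack_run: "set (snd (stack_run c xs st)) \<subseteq> set xs \<union> set st"
  by (metis mset_stack_run set_mset_mono mset_subset_eq_add_right set_mset_mset set_mset_union)

lemma mset_SC: "mset (SC c xs) = mset xs"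
  using mset_stack_run[of c xs "[]"] by (simp add: SC_def sc_aux_eq_stack_run)

lemma stack_run_single: "\<exists>s. snd (stack_run c [x] st) = x # s"
  by (induction st) (auto simp: Let_def)

lemma stack_run_no_output: "fst (stack_run c xs st) = [] \<Longrightarrow> snd (stack_run c xs st) = rev xs @ st"
proof (induction c xs st rule: stack_run.induct)
  case (3 c x xs y st)
  then show ?case by (cases "c (x # y # st)") (simp_all add: Let_def)
qed simp_all

lemma stack_run_inert_bottom:
  "\<forall>w. set w \<subseteq> U \<longrightarrow> c (w @ b) = c w \<Longrightarrow> \<forall>x. \<not> c [x] \<Longrightarrow> b \<noteq> [] \<Longrightarrow>
   set xs \<union> set st \<subseteq> U \<Longrightarrow>
   stack_run c xs (st @ b) = (fst (stack_run c xs st), snd (stack_run c xs st) @ b)"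
proof (induction c xs st rule: stack_run.induct)
  case (2 c x xs)
  obtain y b' where b: "b = y # b'" using "2.prems"(3) by (cases b) auto
  have "c ([x] @ b) = c [x]" using "2.prems"(1)[rule_format, of "[x]"] "2.prems"(4) by simp
  then have "\<not> c (x # y # b')" using "2.prems"(2) b by simp
  moreover have "stack_run c xs ([x] @ b) = (fst (stack_run c xs [x]), snd (stack_run c xs [x]) @ b)"
    using "2.IH"[OF "2.prems"(1-3)] "2.prems"(4) by (simp add: Un_commute)
  ultimately show ?case using b by simp
next
  case (3 c x xs y st)
  have "set (x # y # st) \<subseteq> U" using "3.prems"(4) by auto
  then have inert: "c ((x # y # st) @ b) = c (x # y # st)" using "3.prems"(1) by blast
  show ?case
  proof (cases "c (x # y # st)")
    case False
    have "stack_run c xs ((x # y # st) @ b) =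
        (fst (stack_run c xs (x # y # st)), snd (stack_run c xs (x # y # st)) @ b)"
      using "3.IH"(1)[OF False "3.prems"(1-3)] "3.prems"(4) by auto
    then show ?thesis using False inert by simp
  next
    case True
    have "stack_run c (x # xs) (st @ b) =
        (fst (stack_run c (x # xs) st), snd (stack_run c (x # xs) st) @ b)"
      using "3.IH"(2)[OF _ "3.prems"(1-3)] True "3.prems"(4) by auto
    then show ?thesis using True inert by (simp add: Let_def)
  qed
qed simp

lemma stack_run_keeps_bottom:
  assumes "\<forall>x\<in>set xs. \<not> c (x # b)" and "b \<noteq> []"
  shows "\<exists>out s. stack_run c xs (st @ b) = (out, s @ b)"
  using assms
proof (induction c xs "st @ b" arbitrary: st rule: stack_run.induct)
  case (3 c x xs y st')
  show ?case
  proof (cases "c (x # y # st')")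
    case False
    have "stack_run c (x # xs) (st @ b) = stack_run c xs ((x # st) @ b)"
      using False by (simp flip: "3.hyps"(3))
    then show ?thesis using "3.hyps"(1)[OF False, of "x # st"] "3.hyps"(3) "3.prems" by simp
  next
    case True
    with "3.hyps"(3) "3.prems"(1) obtain st0 where "st = y # st0" "st' = st0 @ b"
      by (cases st) auto
    then show ?thesis using "3.hyps"(2)[of st0] "3.prems" True by (auto simp: Let_def)
  qed
qed auto

definition cons_closed :: "(nat list \<Rightarrow> bool) \<Rightarrow> bool" where
  "cons_closed c \<longleftrightarrow> (\<forall>w y. c w \<longrightarrow> c (y # w))"

lemma cons_closed_append: "cons_closed c \<Longrightarrow> c w \<Longrightarrow> c (zs @ w)"
  by (induction zs) (auto simp: cons_closed_def)

lemma stack_run_no_pop: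
  "cons_closed c \<Longrightarrow> \<not> c (rev xs @ st) \<Longrightarrow> stack_run c xs st = ([], rev xs @ st)"
proof (induction c xs st rule: stack_run.induct)
  case (3 c x xs y st)
  then have "\<not> c (x # y # st)" using cons_closed_append[of c "x # y # st" "rev xs"] by auto
  then show ?case using 3 by simp
qed simp_all

lemma stack_run_avoids:
  "cons_closed c \<Longrightarrow> \<forall>x. \<not> c [x] \<Longrightarrow> \<not> c st \<Longrightarrow> \<not> c (snd (stack_run c xs st))"
proof (induction c xs st rule: stack_run.induct)
  case (3 c x xs y st)
  then have "\<not> c st" unfolding cons_closed_def by blast
  then show ?case using 3 by (cases "c (x # y # st)") (auto simp: Let_def)
qed simp_all

section \<open>The patterns 32_1 and 231\<close>

lemma contains_32_1_Cons:
  "contains_32_1 (a # w) \<longleftrightarrow> contains_32_1 w \<or> (\<exists>b v. w = b # v \<and> b < a \<and> (\<exists>z\<in>set v. z < b))"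
proof
  assume "contains_32_1 (a # w)"
  then obtain j l where jl: "j + 1 < l" "l < Suc (length w)" "(a # w) ! l < (a # w) ! (j + 1)"
      "(a # w) ! (j + 1) < (a # w) ! j"
    unfolding contains_32_1_def by auto
  show "contains_32_1 w \<or> (\<exists>b v. w = b # v \<and> b < a \<and> (\<exists>z\<in>set v. z < b))"
  proof (cases j)
    case 0
    then obtain b v where "w = b # v" using jl by (cases w) auto
    then show ?thesis using jl 0 by (cases l) (auto simp: gr0_conv_Suc intro: nth_mem)
  next
    case (Suc i)
    with jl obtain m where "l = Suc m" by (cases l) auto
    with jl Suc have "contains_32_1 w"
      unfolding contains_32_1_def by (intro exI[of _ i] exI[of _ m]) auto
    then show ?thesis ..
  qed
next
  assume "contains_32_1 w \<or> (\<exists>b v. w = b # v \<and> b < a \<and> (\<exists>z\<in>set v. z < b))"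
  then show "contains_32_1 (a # w)"
  proof
    assume "contains_32_1 w"
    then obtain j l where "j + 1 < l" "l < length w" "w ! l < w ! (j + 1)" "w ! (j + 1) < w ! j"
      unfolding contains_32_1_def by blast
    then show ?thesis unfolding contains_32_1_def by (intro exI[of _ "Suc j"] exI[of _ "Suc l"]) auto
  next
    assume "\<exists>b v. w = b # v \<and> b < a \<and> (\<exists>z\<in>set v. z < b)"
    then obtain b v k where "w = b # v" "b < a" "k < length v" "v ! k < b"
      by (auto simp: in_set_conv_nth)
    then show ?thesis unfolding contains_32_1_def by (intro exI[of _ 0] exI[of _ "k + 2"]) auto
  qed
qed

lemma contains_32_1_simps [simp]:
  "\<not> contains_32_1 []"
  "\<not> contains_32_1 [x]"
  "contains_32_1 (a # b # w) \<longleftrightarrow> contains_32_1 (b # w) \<or> (b < a \<and> (\<exists>z\<in>set w. z < b))"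
  by (simp_all add: contains_32_1_Cons, simp_all add: contains_32_1_def)

lemma cons_closed_contains_32_1: "cons_closed contains_32_1"
  unfolding cons_closed_def by (simp add: contains_32_1_Cons)

lemma contains_32_1_Cons_min: "\<forall>z\<in>set w. a < z \<Longrightarrow> contains_32_1 (a # w) = contains_32_1 w"
  by (cases w) auto

lemma contains_32_1_append_ordered:
  "\<forall>a\<in>set w. \<forall>z\<in>set v. a < z \<Longrightarrow> contains_32_1 (w @ v) \<longleftrightarrow> contains_32_1 w \<or> contains_32_1 v"
proof (induction w rule: induct_list012)
  case (2 a)
  then show ?case by (simp add: contains_32_1_Cons_min)
next
  case (3 a b w)
  have "contains_32_1 (b # w @ v) \<longleftrightarrow> contains_32_1 (b # w) \<or> contains_32_1 v"
    using "3.IH"(2) "3.prems" by simp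
  moreover have "\<not> (\<exists>z\<in>set v. z < b)" using "3.prems" by force
  ultimately show ?case by auto
qed simp

text \<open>\<open>starts_231 x ys\<close>: \<open>x # ys\<close> has an occurrence of 231 whose 2 is \<open>x\<close>; it suffices to
  look for the 1 behind the first entry above \<open>x\<close>.\<close>

fun starts_231 :: "nat \<Rightarrow> nat list \<Rightarrow> bool" where
  "starts_231 x [] = False"
| "starts_231 x (y # ys) = (if x < y then (\<exists>z\<in>set ys. z < x) else starts_231 x ys)"

fun contains_231 :: "nat list \<Rightarrow> bool" where
  "contains_231 [] = False"
| "contains_231 (x # xs) = (contains_231 xs \<or> starts_231 x xs)"

lemma starts_231_imp: "starts_231 x ys \<Longrightarrow> (\<exists>y\<in>set ys. x < y) \<and> (\<exists>z\<in>set ys. z < x)"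
  by (induction ys) (auto split: if_splits)

lemma starts_231_append:
  "starts_231 x (xs @ ys) \<longleftrightarrow>
    starts_231 x xs \<or> ((\<exists>y\<in>set xs. x < y) \<and> (\<exists>z\<in>set ys. z < x)) \<or> starts_231 x ys"
proof (induction xs)
  case (Cons y xs)
  then show ?case using starts_231_imp[of x ys] starts_231_imp[of x xs] by auto
qed simp

lemma contains_231_append_left: "contains_231 ys \<Longrightarrow> contains_231 (xs @ ys)"
  by (induction xs) auto

lemma contains_231_Cons_min: "\<forall>z\<in>set w. m < z \<Longrightarrow> contains_231 (m # w) = contains_231 w"
  using starts_231_imp by fastforce

lemma contains_231_split_at_max:
  assumes "\<forall>x\<in>set xs \<union> set ys. x < n"
  shows "contains_231 (xs @ n # ys) \<longleftrightarrow>
    contains_231 xs \<or> contains_231 ys \<or> (\<exists>a\<in>set xs. \<exists>c\<in>set ys. c < a)"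
  using assms
proof (induction xs)
  case Nil
  then show ?case using starts_231_imp[of n ys] by fastforce
next
  case (Cons x xs)
  then have "starts_231 x (xs @ n # ys) \<longleftrightarrow> starts_231 x xs \<or> (\<exists>z\<in>set ys. z < x)"
    using starts_231_imp[of x xs] by (auto simp: starts_231_append)
  then show ?case using Cons by auto
qed

lemma contains_231_witness:
  assumes "p \<in> set P" "q \<in> set B" "q < p" "p < n"
  shows "contains_231 (P @ Z @ n # B)"
proof -
  obtain P1 P2 where P: "P = P1 @ p # P2" using assms(1) by (meson split_list)
  have "starts_231 p (P2 @ Z @ n # B)" using assms by (auto simp: starts_231_append)
  then show ?thesis using P contains_231_append_left[of "p # P2 @ Z @ n # B" P1] by simp
qed

section \<open>West's stack-sorting map\<close>

lemma contains_21_iff: "contains_21 w \<longleftrightarrow> \<not> sorted w"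
  unfolding contains_21_def sorted_iff_nth_mono_less by (auto simp: not_le)

lemma mset_west_s: "mset (west_s w) = mset w"
  unfolding west_s_def by (rule mset_SC)

lemma set_west_s [simp]: "set (west_s w) = set w"
  by (metis mset_west_s set_mset_mset)

lemma stack_run_21_pop_smaller:
  "\<forall>y\<in>set st. y < n \<Longrightarrow>
   stack_run contains_21 (n # xs) st =
     (st @ fst (stack_run contains_21 xs [n]), snd (stack_run contains_21 xs [n]))"
  by (induction st) (auto simp: contains_21_iff Let_def)

lemma west_s_split_at_max:
  assumes "\<forall>x\<in>set L \<union> set R. x < n"
  shows "west_s (L @ n # R) = west_s L @ west_s R @ [n]"
proof -
  define st where "st = snd (stack_run contains_21 L [])"
  have "\<forall>y\<in>set st. y < n" using assms set_snd_stack_run[of contains_21 L "[]"] unfolding st_def by auto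
  then have "stack_run contains_21 (n # R) st =
      (st @ fst (stack_run contains_21 R [n]), snd (stack_run contains_21 R [n]))"
    by (rule stack_run_21_pop_smaller)
  moreover have "stack_run contains_21 R ([] @ [n]) =
      (fst (stack_run contains_21 R []), snd (stack_run contains_21 R []) @ [n])"
  proof (rule stack_run_inert_bottom[of "set R"])
    show "\<forall>w. set w \<subseteq> set R \<longrightarrow> contains_21 (w @ [n]) = contains_21 w"
      using assms by (auto simp: contains_21_iff sorted_append less_imp_le)
  qed (auto simp: contains_21_iff)
  ultimately show ?thesis
    using stack_run_append[of contains_21 L "n # R" "[]"]
    by (simp add: west_s_def SC_def sc_aux_eq_stack_run st_def Let_def)
qed

lemma sorted_west_s_iff: "distinct w \<Longrightarrow> sorted (west_s w) \<longleftrightarrow> \<not> contains_231 w"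
proof (induction "length w" arbitrary: w rule: less_induct)
  case less
  show ?case
  proof (cases "w = []")
    case True
    then show ?thesis by (simp add: west_s_def SC_def)
  next
    case False
    define n where "n = Max (set w)"
    have "n \<in> set w" using False unfolding n_def by simp
    then obtain L R where w: "w = L @ n # R" by (meson split_list)
    have below: "\<forall>x\<in>set L \<union> set R. x < n"
    proof
      fix x assume "x \<in> set L \<union> set R"
      then have "x \<in> set w" "x \<noteq> n" using w less.prems by auto
      moreover from \<open>x \<in> set w\<close> have "x \<le> n" unfolding n_def by simp
      ultimately show "x < n" by linarith
    qed
    have "sorted (west_s w) \<longleftrightarrow> sorted (west_s L @ west_s R @ [n])"
      using west_s_split_at_max[OF below] w by simp
    also have "\<dots> \<longleftrightarrow> sorted (west_s L) \<and> sorted (west_s R) \<and> \<not> (\<exists>a\<in>set L. \<exists>c\<in>set R. c < a)"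
      using below by (fastforce simp: sorted_append less_imp_le not_le)
    also have "\<dots> \<longleftrightarrow> \<not> contains_231 w"
      using less.hyps[of L] less.hyps[of R] less.prems contains_231_split_at_max[OF below] w by auto
    finally show ?thesis .
  qed
qed

section \<open>The map \<open>SC_32_1\<close> on permutations split at their maximum\<close>

lemma stack_run_output_above_stack:
  "cons_closed c \<Longrightarrow> \<forall>x. \<not> c [x] \<Longrightarrow>
   (\<And>x y st. c (x # y # st) \<Longrightarrow> \<not> c (y # st) \<Longrightarrow> \<exists>z\<in>set st. z < y) \<Longrightarrow> \<not> c st \<Longrightarrow>
   (\<forall>p\<in>set (fst (stack_run c xs st)). \<exists>q\<in>set (snd (stack_run c xs st)). q < p) \<and>
   (\<forall>q\<in>set st. \<exists>q'\<in>set (snd (stack_run c xs st)). q' \<le> q)"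
proof (induction c xs st rule: stack_run.induct)
  case (3 c x xs y st)
  show ?case
  proof (cases "c (x # y # st)")
    case False
    then show ?thesis using "3.IH"(1)[OF False "3.prems"(1-3) False] by auto
  next
    case True
    define r where "r = stack_run c (x # xs) st"
    have "\<not> c st" using "3.prems"(1,4) unfolding cons_closed_def by blast
    then have IH: "(\<forall>p\<in>set (fst r). \<exists>q\<in>set (snd r). q < p) \<and> (\<forall>q\<in>set st. \<exists>q'\<in>set (snd r). q' \<le> q)"
      using "3.IH"(2) "3.prems"(1-3) True unfolding r_def by simp
    obtain z where "z \<in> set st" "z < y" using True "3.prems"(3,4) by blast
    then have "\<exists>q\<in>set (snd r). q < y" using IH by (meson le_less_trans)
    then show ?thesis using IH True unfolding r_def by (auto simp: Let_def intro: less_imp_le)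
  qed
qed auto

lemma SC_32_1_split_at_max:
  assumes below: "\<forall>x\<in>set L \<union> set R. x < n" and "\<forall>a\<in>set L. \<forall>c\<in>set R. c < a"
    and "\<not> contains_32_1 (n # rev L)"
  shows "SC contains_32_1 (L @ n # R) = SC contains_32_1 R @ n # rev L"
proof -
  have "stack_run contains_32_1 (L @ [n]) [] = ([], rev (L @ [n]) @ [])"
    by (rule stack_run_no_pop) (use cons_closed_contains_32_1 assms(3) in auto)
  moreover have "stack_run contains_32_1 R ([] @ n # rev L) =
      (fst (stack_run contains_32_1 R []), snd (stack_run contains_32_1 R []) @ n # rev L)"
  proof (rule stack_run_inert_bottom[of "set R"])
    show "\<forall>w. set w \<subseteq> set R \<longrightarrow> contains_32_1 (w @ n # rev L) = contains_32_1 w"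
    proof (intro allI impI)
      fix w assume "set w \<subseteq> set R"
      then have "\<forall>a\<in>set w. \<forall>z\<in>set (n # rev L). a < z" using assms(1,2) by auto
      then show "contains_32_1 (w @ n # rev L) = contains_32_1 w"
        using contains_32_1_append_ordered assms(3) by blast
    qed
  qed auto
  ultimately show ?thesis
    using stack_run_append[of contains_32_1 "L @ [n]" R "[]"]
    by (simp add: SC_def sc_aux_eq_stack_run Let_def)
qed

lemma SC_32_1_avoiding_231_shape:
  assumes below: "\<forall>x\<in>set L \<union> set R. x < n" and "distinct (L @ [n])"
    and avoid: "\<not> contains_231 (SC contains_32_1 (L @ n # R))"
  shows "\<not> contains_32_1 (n # rev L) \<and>
    (\<exists>X. set X = set R \<and> SC contains_32_1 (L @ n # R) = X @ n # rev L)"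
proof -
  \<comment> \<open>An entry of \<open>L\<close> that is popped lies above an entry left below \<open>n\<close>: a 231 with \<open>n\<close>.\<close>
  define P S where "P = fst (stack_run contains_32_1 (L @ [n]) [])"
    and "S = snd (stack_run contains_32_1 (L @ [n]) [])"
  obtain B where S: "S = n # B"
    using stack_run_append[of contains_32_1 L "[n]" "[]"] stack_run_single[of contains_32_1 n]
    unfolding S_def by (auto simp: Let_def)
  have avoid_S: "\<not> contains_32_1 S"
    unfolding S_def by (rule stack_run_avoids) (simp_all add: cons_closed_contains_32_1)
  have popped: "\<forall>p\<in>set P. \<exists>q\<in>set S. q < p"
    using stack_run_output_above_stack[where c = contains_32_1 and xs = "L @ [n]" and st = "[]"]
    unfolding P_def S_def by (simp add: cons_closed_contains_32_1)
  have mset_PS: "mset (P @ S) = mset (L @ [n])"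
    using mset_stack_run[of contains_32_1 "L @ [n]" "[]"] unfolding P_def S_def by simp
  then have "distinct (P @ S)" using assms(2) mset_eq_imp_distinct_iff by blast
  moreover have "set (P @ S) = set (L @ [n])" using mset_PS by (rule mset_eq_setD)
  ultimately have P_L: "set P \<subseteq> set L" using S by auto
  have "\<forall>x\<in>set R. \<not> contains_32_1 (x # n # B)"
  proof
    fix x assume "x \<in> set R"
    then have "\<not> n < x" using below by (meson UnI2 order_less_asym)
    then show "\<not> contains_32_1 (x # n # B)" using avoid_S S by simp
  qed
  then obtain out s where R: "stack_run contains_32_1 R ([] @ n # B) = (out, s @ n # B)"
    using stack_run_keeps_bottom by blast
  have "mset (out @ s) = mset R" using mset_stack_run[of contains_32_1 R "n # B"] R by simp
  then have set_R: "set (out @ s) = set R" by (rule mset_eq_setD)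
  have SC: "SC contains_32_1 (L @ n # R) = P @ (out @ s) @ n # B"
    using stack_run_append[of contains_32_1 "L @ [n]" R "[]"] R
    unfolding SC_def sc_aux_eq_stack_run by (simp add: Let_def P_def S_def[symmetric] S)
  have "P = []"
  proof (rule ccontr)
    assume "P \<noteq> []"
    then obtain p where p: "p \<in> set P" by (cases P) auto
    then obtain q where "q \<in> set S" "q < p" using popped by blast
    moreover have "p < n" using p P_L below by auto
    ultimately have "contains_231 (P @ (out @ s) @ n # B)"
      using S contains_231_witness[of p P q B n "out @ s"] p by auto
    then show False using avoid SC by simp
  qed
  then have "B = rev L"
    using S stack_run_no_output[of contains_32_1 "L @ [n]" "[]"] unfolding P_def S_def by simp
  then show ?thesis using avoid_S S SC set_R \<open>P = []\<close> by auto
qed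

theorem SC_32_1_avoids_231_iff:
  assumes below: "\<forall>x\<in>set L \<union> set R. x < n" and distinct: "distinct (L @ n # R)"
  shows "\<not> contains_231 (SC contains_32_1 (L @ n # R)) \<longleftrightarrow>
    \<not> contains_32_1 (n # rev L) \<and> \<not> contains_231 (rev L) \<and> \<not> contains_231 (SC contains_32_1 R) \<and>
    (\<forall>a\<in>set L. \<forall>c\<in>set R. c < a)"
proof
  assume avoid: "\<not> contains_231 (SC contains_32_1 (L @ n # R))"
  then obtain X where X: "set X = set R" "SC contains_32_1 (L @ n # R) = X @ n # rev L"
    and n_L: "\<not> contains_32_1 (n # rev L)"
    using SC_32_1_avoiding_231_shape[OF below] distinct by auto
  have below_X: "\<forall>x\<in>set X \<union> set (rev L). x < n" using below X by auto
  have "\<not> contains_231 (rev L)" and LR: "\<forall>a\<in>set L. \<forall>c\<in>set R. c < a"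
    using avoid distinct X contains_231_split_at_max[OF below_X] by (fastforce simp: not_less)+
  moreover have "SC contains_32_1 (L @ n # R) = SC contains_32_1 R @ n # rev L"
    using SC_32_1_split_at_max[OF below LR n_L] .
  then have "\<not> contains_231 (SC contains_32_1 R)"
    using avoid X(2) contains_231_split_at_max[OF below_X] by simp
  ultimately show "\<not> contains_32_1 (n # rev L) \<and> \<not> contains_231 (rev L) \<and>
      \<not> contains_231 (SC contains_32_1 R) \<and> (\<forall>a\<in>set L. \<forall>c\<in>set R. c < a)"
    using n_L by blast
next
  assume "\<not> contains_32_1 (n # rev L) \<and> \<not> contains_231 (rev L) \<and>
      \<not> contains_231 (SC contains_32_1 R) \<and> (\<forall>a\<in>set L. \<forall>c\<in>set R. c < a)"
  moreover have "set (SC contains_32_1 R) = set R" by (metis mset_SC set_mset_mset)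
  ultimately show "\<not> contains_231 (SC contains_32_1 (L @ n # R))"
    using SC_32_1_split_at_max[OF below] contains_231_split_at_max[of "SC contains_32_1 R" "rev L" n] below
    by fastforce
qed

section \<open>Motzkin paths\<close>

lemma card_image_Sigma_times:
  assumes "inj_on f (SIGMA k:K. A k \<times> B k)" "finite K" "\<forall>k\<in>K. finite (A k) \<and> finite (B k)"
  shows "card (f ` (SIGMA k:K. A k \<times> B k)) = (\<Sum>k\<in>K. card (A k) * card (B k))"
  using assms by (simp add: card_image card_cartesian_product)

lemma All_le_Suc: "(\<forall>k\<le>Suc m. P k) \<longleftrightarrow> P 0 \<and> (\<forall>k\<le>m. P (Suc k))"
  by (simp add: All_less_Suc2 flip: less_Suc_eq_le)

fun nonneg_walk :: "int \<Rightarrow> int list \<Rightarrow> bool" where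
  "nonneg_walk h [] = True"
| "nonneg_walk h (s # p) \<longleftrightarrow> s \<in> {-1, 0, 1} \<and> 0 \<le> h + s \<and> nonneg_walk (h + s) p"

lemma nonneg_walk_iff:
  "0 \<le> h \<Longrightarrow>
   nonneg_walk h p \<longleftrightarrow> set p \<subseteq> {-1, 0, 1} \<and> (\<forall>k\<le>length p. 0 \<le> h + sum_list (take k p))"
proof (induction p arbitrary: h)
  case (Cons s p)
  have all: "(\<forall>k\<le>length (s # p). 0 \<le> h + sum_list (take k (s # p))) \<longleftrightarrow>
      (\<forall>k\<le>length p. 0 \<le> h + s + sum_list (take k p))"
    unfolding length_Cons All_le_Suc using Cons.prems by (simp add: add.assoc)
  show ?case
  proof (cases "0 \<le> h + s")
    case True
    then show ?thesis using Cons.IH[OF True] all by simp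
  next
    case False
    then show ?thesis using all spec[of _ 0] by auto
  qed
qed simp

lemma motzkin_paths_eq: "motzkin_paths n = {p. length p = n \<and> nonneg_walk 0 p \<and> sum_list p = 0}"
  unfolding motzkin_paths_def using nonneg_walk_iff[of 0] by auto

lemma nonneg_walk_append: "nonneg_walk h (p @ q) \<longleftrightarrow> nonneg_walk h p \<and> nonneg_walk (h + sum_list p) q"
  by (induction p arbitrary: h) (auto simp: add.assoc)

lemma nonneg_walk_mono: "nonneg_walk h p \<Longrightarrow> h \<le> h' \<Longrightarrow> nonneg_walk h' p"
  by (induction p arbitrary: h h') auto

lemma first_return:
  "0 \<le> c \<Longrightarrow> nonneg_walk (c + 1) p \<Longrightarrow> c + 1 + sum_list p = 0 \<Longrightarrow>
   \<exists>q1 q2. p = q1 @ (-1) # q2 \<and> nonneg_walk c q1 \<and> c + sum_list q1 = 0 \<and>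
     nonneg_walk 0 q2 \<and> sum_list q2 = 0"
proof (induction p arbitrary: c)
  case (Cons s p)
  show ?case
  proof (cases "c = 0 \<and> s = -1")
    case True
    then show ?thesis using Cons.prems by (intro exI[of _ "[]"] exI[of _ p]) auto
  next
    case False
    then have "0 \<le> c + s" using Cons.prems(1,2) by auto
    moreover have "nonneg_walk (c + s + 1) p" "c + s + 1 + sum_list p = 0"
      using Cons.prems(2,3) by (simp_all add: algebra_simps)
    ultimately obtain q1 q2 where "p = q1 @ (-1) # q2" "nonneg_walk (c + s) q1" "c + s + sum_list q1 = 0"
        "nonneg_walk 0 q2" "sum_list q2 = 0"
      using Cons.IH by blast
    then show ?thesis using Cons.prems(2) \<open>0 \<le> c + s\<close>
      by (intro exI[of _ "s # q1"] exI[of _ q2]) (auto simp: add.assoc)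
  qed
qed simp

lemma first_return_unique:
  assumes "q1 @ (-1) # q2 = q1' @ (-1) # q2'"
    and "nonneg_walk 0 q1" "sum_list q1 = 0" "nonneg_walk 0 q1'" "sum_list q1' = 0"
  shows "q1 = q1'"
proof (rule ccontr)
  assume "q1 \<noteq> q1'"
  then obtain us where "q1 = q1' @ (-1) # us \<or> q1' = q1 @ (-1) # us"
    using assms(1) by (auto simp: append_eq_append_conv2 Cons_eq_append_conv append_eq_Cons_conv)
  then show False using assms(2-5) by (auto simp: nonneg_walk_append)
qed

text \<open>The number of Motzkin paths of length \<open>j + 1\<close> that return to the axis only at the end.\<close>

definition motzkin_primitive :: "nat \<Rightarrow> nat" where
  "motzkin_primitive j = (if j = 0 then 1 else motzkin (j - 1))"

definition primitive_paths :: "nat \<Rightarrow> int list set" where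
  "primitive_paths j = (if j = 0 then {[0]} else (\<lambda>q. 1 # q @ [-1]) ` motzkin_paths (j - 1))"

lemma finite_motzkin_paths: "finite (motzkin_paths n)"
proof (rule finite_subset)
  show "motzkin_paths n \<subseteq> {p. set p \<subseteq> {-1, 0, 1} \<and> length p = n}"
    unfolding motzkin_paths_def by auto
qed (simp add: finite_lists_length_eq)

lemma card_primitive_paths: "card (primitive_paths j) = motzkin_primitive j"
  by (simp add: primitive_paths_def motzkin_primitive_def motzkin_def card_image inj_on_def)

lemma primitive_path_is_motzkin_path:
  assumes "a \<in> primitive_paths j"
  shows "length a = Suc j \<and> nonneg_walk 0 a \<and> sum_list a = 0"
proof (cases "j = 0")
  case False
  then obtain q where "a = 1 # q @ [-1]" "q \<in> motzkin_paths (j - 1)"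
    using assms by (auto simp: primitive_paths_def)
  moreover from this have "nonneg_walk 1 q"
    using nonneg_walk_mono[of 0 q 1] by (simp add: motzkin_paths_eq)
  ultimately show ?thesis using False by (auto simp: motzkin_paths_eq nonneg_walk_append)
qed (use assms in \<open>simp add: primitive_paths_def\<close>)

lemma motzkin_paths_Suc:
  "motzkin_paths (Suc n) =
    (\<lambda>(k, a, q). a @ q) ` (SIGMA k:{..n}. primitive_paths (n - k) \<times> motzkin_paths k)"
proof (intro equalityI subsetI)
  fix p assume "p \<in> motzkin_paths (Suc n)"
  then obtain s q where p: "p = s # q" "length q = n" "nonneg_walk s q" "s \<in> {0, 1}"
      "s + sum_list q = 0"
    unfolding motzkin_paths_eq by (cases p) auto
  show "p \<in> (\<lambda>(k, a, q). a @ q) ` (SIGMA k:{..n}. primitive_paths (n - k) \<times> motzkin_paths k)"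
  proof (cases "s = 0")
    case True
    show ?thesis
    proof (rule image_eqI[where x = "(n, [0], q)"])
      show "(n, [0], q) \<in> (SIGMA k:{..n}. primitive_paths (n - k) \<times> motzkin_paths k)"
        using p True by (simp add: primitive_paths_def motzkin_paths_eq)
    qed (simp add: p True)
  next
    case False
    then have "nonneg_walk (0 + 1) q" "0 + 1 + sum_list q = 0" using p by simp_all
    then obtain q1 q2 where q: "q = q1 @ (-1) # q2" "nonneg_walk 0 q1" "sum_list q1 = 0"
        "nonneg_walk 0 q2" "sum_list q2 = 0"
      using first_return[of 0 q] by auto
    have "n - length q2 = Suc (length q1)" using p(2) q(1) by simp
    then have "1 # q1 @ [-1] \<in> primitive_paths (n - length q2)"
      using q by (simp add: primitive_paths_def motzkin_paths_eq)
    moreover have "q2 \<in> motzkin_paths (length q2)" "length q2 \<le> n"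
      using q p(2) by (simp_all add: motzkin_paths_eq)
    ultimately show ?thesis
      using p(1) q(1) False \<open>s \<in> {0, 1}\<close>
      by (intro image_eqI[where x = "(length q2, 1 # q1 @ [-1], q2)"]) auto
  qed
next
  fix p assume "p \<in> (\<lambda>(k, a, q). a @ q) ` (SIGMA k:{..n}. primitive_paths (n - k) \<times> motzkin_paths k)"
  then obtain k a q where "k \<le> n" "a \<in> primitive_paths (n - k)" "q \<in> motzkin_paths k" "p = a @ q"
    by auto
  then show "p \<in> motzkin_paths (Suc n)"
    using primitive_path_is_motzkin_path[of a "n - k"]
    by (auto simp: motzkin_paths_eq nonneg_walk_append)
qed

lemma inj_on_append_primitive:
  "inj_on (\<lambda>(k, a, q). a @ q) (SIGMA k:{..n}. primitive_paths (n - k) \<times> motzkin_paths k)"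
proof (rule inj_onI, clarsimp)
  fix k a q k' a' q'
  assume a: "a \<in> primitive_paths (n - k)" and a': "a' \<in> primitive_paths (n - k')"
    and "q \<in> motzkin_paths k" "q' \<in> motzkin_paths k'" and eq: "a @ q = a' @ q'"
  have "a = a'"
  proof (cases "n - k = 0"; cases "n - k' = 0")
    assume "n - k \<noteq> 0" "n - k' \<noteq> 0"
    then obtain q1 q1' where "a = 1 # q1 @ [-1]" "a' = 1 # q1' @ [-1]"
        "q1 \<in> motzkin_paths (n - k - 1)" "q1' \<in> motzkin_paths (n - k' - 1)"
      using a a' by (auto simp: primitive_paths_def)
    then show "a = a'"
      using eq first_return_unique[of q1 q q1' q'] by (auto simp: motzkin_paths_eq)
  qed (use a a' eq in \<open>auto simp: primitive_paths_def\<close>)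
  then have "q = q'" using eq by simp
  then show "k = k' \<and> a = a' \<and> q = q'"
    using \<open>a = a'\<close> \<open>q \<in> motzkin_paths k\<close> \<open>q' \<in> motzkin_paths k'\<close> by (simp add: motzkin_paths_def)
qed

lemma motzkin_0: "motzkin 0 = 1"
proof -
  have "motzkin_paths 0 = {[]}" by (auto simp: motzkin_paths_def)
  then show ?thesis by (simp add: motzkin_def)
qed

lemma motzkin_Suc: "motzkin (Suc n) = (\<Sum>k\<le>n. motzkin k * motzkin_primitive (n - k))"
proof -
  have "motzkin (Suc n) = (\<Sum>k\<le>n. card (primitive_paths (n - k)) * card (motzkin_paths k))"
    unfolding motzkin_def motzkin_paths_Suc
    by (rule card_image_Sigma_times[OF inj_on_append_primitive])
      (simp_all add: finite_motzkin_paths primitive_paths_def)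
  then show ?thesis by (simp add: card_primitive_paths motzkin_def mult.commute)
qed

section \<open>Counting by splitting at the maximum\<close>

definition lower :: "nat \<Rightarrow> nat set \<Rightarrow> nat set" where
  "lower k S = set (take k (sorted_list_of_set S))"

definition upper :: "nat \<Rightarrow> nat set \<Rightarrow> nat set" where
  "upper k S = set (drop k (sorted_list_of_set S))"

lemma lower_upper:
  assumes "finite S"
  shows "lower k S \<union> upper k S = S" "\<forall>a\<in>lower k S. \<forall>b\<in>upper k S. a < b"
    and "k \<le> card S \<Longrightarrow> card (lower k S) = k" "card (upper k S) = card S - k"
proof -
  let ?l = "sorted_list_of_set S"
  have l: "sorted_wrt (<) ?l" "distinct ?l" "set ?l = S" "length ?l = card S"
    using assms by (simp_all add: strict_sorted_list_of_set)
  show "lower k S \<union> upper k S = S" unfolding lower_def upper_def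
    by (metis l(3) append_take_drop_id set_append)
  show "\<forall>a\<in>lower k S. \<forall>b\<in>upper k S. a < b" unfolding lower_def upper_def
    using l(1) sorted_wrt_append[of "(<)" "take k ?l" "drop k ?l"] by simp
  show "k \<le> card S \<Longrightarrow> card (lower k S) = k" "card (upper k S) = card S - k"
    unfolding lower_def upper_def using l(2,4) by (simp_all add: distinct_card)
qed

lemma sorted_list_split_unique:
  "sorted_wrt (<) (l :: nat list) \<Longrightarrow> set l = A \<union> B \<Longrightarrow> \<forall>a\<in>A. \<forall>b\<in>B. a < b \<Longrightarrow>
   A = set (take (card A) l) \<and> B = set (drop (card A) l)"
proof (induction l arbitrary: A B)
  case (Cons x l)
  have below: "\<forall>y\<in>set l. x < y" using Cons.prems(1) by simp
  show ?case
  proof (cases "x \<in> A")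
    case True
    define k where "k = card (A - {x})"
    have "finite A" using Cons.prems(2) finite_subset[of A "set (x # l)"] by blast
    then have card_A: "card A = Suc k" unfolding k_def using True by (rule card.remove)
    have "x \<notin> B" using True Cons.prems(3) by blast
    have "sorted_wrt (<) l" using Cons.prems(1) by simp
    moreover have "set l = (A - {x}) \<union> B" using Cons.prems(2) below \<open>x \<notin> B\<close> by auto
    moreover have "\<forall>a\<in>A - {x}. \<forall>b\<in>B. a < b" using Cons.prems(3) by blast
    ultimately have "A - {x} = set (take k l) \<and> B = set (drop k l)"
      unfolding k_def by (rule Cons.IH)
    then show ?thesis using True card_A by auto
  next
    case False
    have "A = {}"
    proof
      show "A \<subseteq> {}"
      proof
        fix a assume "a \<in> A"
        then have "a \<in> set l" "x \<in> B" using Cons.prems(2) False by auto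
        then have "x < a" "a < x" using below Cons.prems(3) \<open>a \<in> A\<close> by auto
        then show "a \<in> {}" by simp
      qed
    qed simp
    then show ?thesis using Cons.prems(2) by simp
  qed
qed simp

lemma lower_upper_unique:
  assumes "finite S" "A \<union> B = S" "\<forall>a\<in>A. \<forall>b\<in>B. a < b"
  shows "A = lower (card A) S" "B = upper (card A) S"
  using sorted_list_split_unique[of "sorted_list_of_set S" A B] assms
  by (simp_all add: lower_def upper_def strict_sorted_list_of_set)

lemma permutations_split_at_max:
  assumes "finite S" and below: "\<forall>x\<in>S. x < M"
    and split: "\<And>xs ys. distinct (xs @ ys) \<Longrightarrow> set (xs @ ys) = S \<Longrightarrow>
      P (xs @ M # ys) \<longleftrightarrow> (\<forall>a\<in>set xs. \<forall>b\<in>set ys. a < b) \<and> PL xs \<and> PR ys"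
  shows "{w \<in> permutations_of_set (insert M S). P w} =
    (\<lambda>(k, xs, ys). xs @ M # ys) ` (SIGMA k:{..card S}.
      {xs \<in> permutations_of_set (lower k S). PL xs} \<times> {ys \<in> permutations_of_set (upper k S). PR ys})"
    (is "_ = ?f ` ?Sigma")
proof -
  have "M \<notin> S" using below by auto
  show ?thesis
  proof (intro equalityI subsetI)
    fix w assume w: "w \<in> {w \<in> permutations_of_set (insert M S). P w}"
    then have "M \<in> set w" by (simp add: permutations_of_set_def)
    then obtain xs ys where w_eq: "w = xs @ M # ys" using split_list by metis
    have "distinct (xs @ ys)" "set (xs @ ys) = S"
      using w \<open>M \<notin> S\<close> unfolding w_eq by (auto simp: permutations_of_set_def)
    moreover have "P (xs @ M # ys)" using w w_eq by simp
    ultimately have ordered: "\<forall>a\<in>set xs. \<forall>b\<in>set ys. a < b" and "PL xs" "PR ys"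
      using split by blast+
    have "set xs \<union> set ys = S" using \<open>set (xs @ ys) = S\<close> by simp
    have card_xs: "card (set xs) = length xs" using \<open>distinct (xs @ ys)\<close> by (simp add: distinct_card)
    have "set xs \<subseteq> S" using \<open>set xs \<union> set ys = S\<close> by blast
    then have "card (set xs) \<le> card S" by (rule card_mono[OF assms(1)])
    then have "length xs \<le> card S" using card_xs by linarith
    moreover note lower_upper_unique[OF assms(1) \<open>set xs \<union> set ys = S\<close> ordered, unfolded card_xs]
    ultimately have "(length xs, xs, ys) \<in> ?Sigma"
      using \<open>distinct (xs @ ys)\<close> \<open>PL xs\<close> \<open>PR ys\<close> by (simp add: permutations_of_set_def)
    then show "w \<in> ?f ` ?Sigma" by (rule image_eqI[rotated]) (simp add: w_eq)
  next
    fix w assume "w \<in> ?f ` ?Sigma"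
    then obtain k xs ys where "w = xs @ M # ys" and xs_ys: "set xs = lower k S" "distinct xs" "PL xs"
        "set ys = upper k S" "distinct ys" "PR ys"
      by (auto simp: permutations_of_set_def)
    then have ordered: "\<forall>a\<in>set xs. \<forall>b\<in>set ys. a < b" and "set (xs @ ys) = S"
      using lower_upper[OF assms(1), of k] by simp_all
    moreover from ordered have "set xs \<inter> set ys = {}" by fastforce
    ultimately have "distinct (xs @ ys)" "P (xs @ M # ys)" using xs_ys split by simp_all
    then show "w \<in> {w \<in> permutations_of_set (insert M S). P w}"
      using \<open>w = xs @ M # ys\<close> \<open>set (xs @ ys) = S\<close> \<open>M \<notin> S\<close> by (auto simp: permutations_of_set_def)
  qed
qed

lemma inj_on_split_at_max:
  assumes "finite S" "M \<notin> S"
    and "\<forall>k. A k \<subseteq> permutations_of_set (lower k S) \<and> B k \<subseteq> permutations_of_set (upper k S)"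
  shows "inj_on (\<lambda>(k, xs, ys). xs @ M # ys) (SIGMA k:{..card S}. A k \<times> B k)"
proof (rule inj_onI)
  fix u v assume "u \<in> (SIGMA k:{..card S}. A k \<times> B k)" "v \<in> (SIGMA k:{..card S}. A k \<times> B k)"
    and eq: "(\<lambda>(k, xs, ys). xs @ M # ys) u = (\<lambda>(k, xs, ys). xs @ M # ys) v"
  obtain k xs ys k' xs' ys' where uv: "u = (k, xs, ys)" "v = (k', xs', ys')"
    by (cases u, cases v) auto
  with \<open>u \<in> _\<close> \<open>v \<in> _\<close> have "k \<le> card S" "k' \<le> card S" "xs \<in> A k" "ys \<in> B k" "xs' \<in> A k'"
    by auto
  then have sets: "set xs = lower k S" "set ys = upper k S" "set xs' = lower k' S"
    using assms(3) by (meson permutations_of_setD(1) subsetD)+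
  have "M \<notin> set xs" "M \<notin> set ys"
    using sets assms(2) lower_upper(1)[OF assms(1), of k] by blast+
  then have "xs = xs'" "ys = ys'" using eq uv append_Cons_eq_iff[of M xs ys xs' ys'] by simp_all
  moreover have "k = k'"
    using sets \<open>xs = xs'\<close> lower_upper(3)[OF assms(1) \<open>k \<le> card S\<close>]
      lower_upper(3)[OF assms(1) \<open>k' \<le> card S\<close>] by simp
  ultimately show "u = v" using uv by simp
qed

lemma card_permutations_split_at_max:
  assumes "finite S" and below: "\<forall>x\<in>S. x < M"
    and split: "\<And>xs ys. distinct (xs @ ys) \<Longrightarrow> set (xs @ ys) = S \<Longrightarrow>
      P (xs @ M # ys) \<longleftrightarrow> (\<forall>a\<in>set xs. \<forall>b\<in>set ys. a < b) \<and> PL xs \<and> PR ys"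
  shows "card {w \<in> permutations_of_set (insert M S). P w} =
    (\<Sum>k\<le>card S. card {xs \<in> permutations_of_set (lower k S). PL xs} *
                 card {ys \<in> permutations_of_set (upper k S). PR ys})"
proof -
  have "inj_on (\<lambda>(k, xs, ys). xs @ M # ys) (SIGMA k:{..card S}.
      {xs \<in> permutations_of_set (lower k S). PL xs} \<times> {ys \<in> permutations_of_set (upper k S). PR ys})"
    using below by (intro inj_on_split_at_max[OF assms(1)]) auto
  moreover note permutations_split_at_max[OF assms(1) below split]
  ultimately show ?thesis by (simp add: card_image_Sigma_times)
qed

lemma card_permutations_rev:
  "card {w \<in> permutations_of_set S. P (rev w)} = card {w \<in> permutations_of_set S. P w}"
proof (rule bij_betw_same_card)
  show "bij_betw rev {w \<in> permutations_of_set S. P (rev w)} {w \<in> permutations_of_set S. P w}"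
    by (rule bij_betw_byWitness[where f' = rev]) (auto simp: permutations_of_set_def)
qed

lemma insert_Max_below:
  assumes "finite S" "S \<noteq> {}"
  shows "\<exists>S'. S = insert (Max S) S' \<and> finite S' \<and> (\<forall>x\<in>S'. x < Max S) \<and> card S = Suc (card S')"
proof (intro exI conjI)
  let ?S' = "S - {Max S}"
  show "S = insert (Max S) ?S'" using Max_in[OF assms] by blast
  show "finite ?S'" using assms(1) by simp
  show "\<forall>x\<in>?S'. x < Max S" using Max_ge[OF assms(1)] by (simp add: order.strict_iff_order)
  show "card S = Suc (card ?S')" using card.remove[OF assms(1) Max_in[OF assms]] .
qed

definition perms_avoiding_32_1_231 :: "nat set \<Rightarrow> nat list set" where
  "perms_avoiding_32_1_231 S = {w \<in> permutations_of_set S. \<not> contains_32_1 w \<and> \<not> contains_231 w}"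

lemma avoiding_32_1_231_split_at_max:
  assumes "\<forall>x\<in>set xs \<union> set ys. x < M" "distinct (xs @ ys)"
  shows "\<not> contains_32_1 (xs @ M # ys) \<and> \<not> contains_231 (xs @ M # ys) \<longleftrightarrow>
    (\<forall>a\<in>set xs. \<forall>b\<in>set ys. a < b) \<and> (\<not> contains_32_1 xs \<and> \<not> contains_231 xs) \<and>
    (\<not> contains_32_1 (M # ys) \<and> \<not> contains_231 ys)"
proof -
  have "a \<noteq> b" if "a \<in> set xs" "b \<in> set ys" for a b using assms(2) that by auto
  then have "(\<forall>a\<in>set xs. \<forall>b\<in>set ys. a < b) \<longleftrightarrow> \<not> (\<exists>a\<in>set xs. \<exists>c\<in>set ys. c < a)"
    by (auto simp: not_less order.order_iff_strict)
  moreover have "contains_32_1 (xs @ M # ys) \<longleftrightarrow> contains_32_1 xs \<or> contains_32_1 (M # ys)"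
    if "\<forall>a\<in>set xs. \<forall>b\<in>set ys. a < b"
    using that assms(1) by (intro contains_32_1_append_ordered) auto
  ultimately show ?thesis using contains_231_split_at_max[OF assms(1)] by blast
qed

lemma permutations_after_max_eq:
  assumes "finite D" "D \<noteq> {}" "\<forall>x\<in>D. x < M"
  shows "{w \<in> permutations_of_set D. \<not> contains_32_1 (M # w) \<and> \<not> contains_231 w} =
    (#) (Min D) ` perms_avoiding_32_1_231 (D - {Min D})"
proof (intro equalityI subsetI)
  fix w assume w: "w \<in> {w \<in> permutations_of_set D. \<not> contains_32_1 (M # w) \<and> \<not> contains_231 w}"
  then obtain y v where w_yv: "w = y # v" using assms(2) by (cases w) (auto simp: permutations_of_set_def)
  with w have y: "y \<in> D" "distinct (y # v)" "set v = D - {y}" "\<not> contains_231 v"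
    by (auto simp: permutations_of_set_def)
  have "\<not> contains_32_1 (M # y # v)" using w w_yv by simp
  then have "\<not> contains_32_1 (y # v)" "\<forall>z\<in>set v. \<not> z < y"
    using assms(3) y(1) by auto
  then have "\<not> contains_32_1 v" using cons_closed_contains_32_1 unfolding cons_closed_def by blast
  have "y = Min D"
    using assms(1) y \<open>\<forall>z\<in>set v. \<not> z < y\<close> by (intro Min_eqI[symmetric]) (auto simp: not_less)
  with y show "w \<in> (#) (Min D) ` perms_avoiding_32_1_231 (D - {Min D})"
    using w_yv \<open>\<not> contains_32_1 v\<close>
    by (auto simp: perms_avoiding_32_1_231_def permutations_of_set_def)
next
  fix w assume "w \<in> (#) (Min D) ` perms_avoiding_32_1_231 (D - {Min D})"
  then obtain v where w: "w = Min D # v" and v: "v \<in> perms_avoiding_32_1_231 (D - {Min D})" by blast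
  have "Min D \<in> D" using assms(1,2) by (rule Min_in)
  have "\<forall>z\<in>set v. Min D < z"
    using v assms(1) by (auto simp: perms_avoiding_32_1_231_def permutations_of_set_def order.strict_iff_order)
  then have "\<not> contains_231 (Min D # v)" "\<not> contains_32_1 (M # Min D # v)"
    using v contains_231_Cons_min contains_32_1_Cons_min
    by (auto simp: perms_avoiding_32_1_231_def not_less less_imp_le)
  then show "w \<in> {w \<in> permutations_of_set D. \<not> contains_32_1 (M # w) \<and> \<not> contains_231 w}"
    using v w \<open>Min D \<in> D\<close>
    by (auto simp: perms_avoiding_32_1_231_def permutations_of_set_def)
qed

lemma card_perms_after_max_eq:
  assumes "finite D" "D \<noteq> {}" "\<forall>x\<in>D. x < M"
  shows "card {w \<in> permutations_of_set D. \<not> contains_32_1 (M # w) \<and> \<not> contains_231 w} =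
    card (perms_avoiding_32_1_231 (D - {Min D}))"
  using permutations_after_max_eq[OF assms] by (simp add: card_image)

lemma card_perms_avoiding_32_1_231:
  "finite S \<Longrightarrow> card (perms_avoiding_32_1_231 S) = motzkin (card S)"
proof (induction "card S" arbitrary: S rule: less_induct)
  case less
  show ?case
  proof (cases "S = {}")
    case True
    then show ?thesis by (simp add: perms_avoiding_32_1_231_def motzkin_0 Collect_conv_if)
  next
    case False
    define M where "M = Max S"
    obtain S' where S: "S = insert M S'" "finite S'" "\<forall>x\<in>S'. x < M" "card S = Suc (card S')"
      using insert_Max_below[OF less.prems False] unfolding M_def by blast
    have IH: "card (perms_avoiding_32_1_231 T) = motzkin (card T)" if "T \<subseteq> S'" for T
    proof (rule less.hyps)
      show "finite T" using S(2) that by (rule finite_subset[rotated])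
      show "card T < card S" using card_mono[OF S(2) that] S(4) by simp
    qed
    have after: "card {ys \<in> permutations_of_set D. \<not> contains_32_1 (M # ys) \<and> \<not> contains_231 ys} =
        motzkin_primitive (card D)" if "D \<subseteq> S'" for D
    proof (cases "D = {}")
      case False
      have "finite D" using S(2) that by (rule finite_subset[rotated])
      have "card {ys \<in> permutations_of_set D. \<not> contains_32_1 (M # ys) \<and> \<not> contains_231 ys} =
          card (perms_avoiding_32_1_231 (D - {Min D}))"
        using card_perms_after_max_eq[OF \<open>finite D\<close> False] S(3) that by blast
      also have "\<dots> = motzkin (card D - 1)"
        using IH[of "D - {Min D}"] that Min_in[OF \<open>finite D\<close> False] \<open>finite D\<close> by auto
      finally show ?thesis using False \<open>finite D\<close> by (simp add: motzkin_primitive_def)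
    qed (simp add: motzkin_primitive_def Collect_conv_if)
    have "card (perms_avoiding_32_1_231 S) =
        (\<Sum>k\<le>card S'. card (perms_avoiding_32_1_231 (lower k S')) *
          card {ys \<in> permutations_of_set (upper k S'). \<not> contains_32_1 (M # ys) \<and> \<not> contains_231 ys})"
      unfolding S(1) perms_avoiding_32_1_231_def
      by (rule card_permutations_split_at_max[OF S(2,3)])
        (use S(3) avoiding_32_1_231_split_at_max in auto)
    also have "\<dots> = (\<Sum>k\<le>card S'. motzkin k * motzkin_primitive (card S' - k))"
    proof (rule sum.cong)
      fix k assume "k \<in> {..card S'}"
      then have "card (lower k S') = k" "card (upper k S') = card S' - k"
        using lower_upper(3,4)[OF S(2)] by simp_all
      moreover have "lower k S' \<subseteq> S'" "upper k S' \<subseteq> S'" using lower_upper(1)[OF S(2)] by blast+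
      ultimately show "card (perms_avoiding_32_1_231 (lower k S')) *
          card {ys \<in> permutations_of_set (upper k S'). \<not> contains_32_1 (M # ys) \<and> \<not> contains_231 ys} =
          motzkin k * motzkin_primitive (card S' - k)"
        using IH[of "lower k S'"] after[of "upper k S'"] by simp
    qed simp
    finally show ?thesis using S(4) by (simp add: motzkin_Suc)
  qed
qed

lemma card_perms_after_max:
  assumes "finite D" "\<forall>x\<in>D. x < M"
  shows "card {w \<in> permutations_of_set D. \<not> contains_32_1 (M # w) \<and> \<not> contains_231 w} =
    motzkin_primitive (card D)"
proof (cases "D = {}")
  case False
  have "card {w \<in> permutations_of_set D. \<not> contains_32_1 (M # w) \<and> \<not> contains_231 w} =
      card (perms_avoiding_32_1_231 (D - {Min D}))"
    using card_perms_after_max_eq[OF assms(1) False assms(2)] .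
  also have "\<dots> = motzkin (card D - 1)"
    using card_perms_avoiding_32_1_231 Min_in[OF assms(1) False] assms(1) by simp
  finally show ?thesis using False assms(1) by (simp add: motzkin_primitive_def)
qed (simp add: motzkin_primitive_def Collect_conv_if)

definition SC_32_1_sortable :: "nat set \<Rightarrow> nat list set" where
  "SC_32_1_sortable S = {w \<in> permutations_of_set S. \<not> contains_231 (SC contains_32_1 w)}"

lemma card_SC_32_1_sortable: "finite S \<Longrightarrow> card (SC_32_1_sortable S) = motzkin (card S)"
proof (induction "card S" arbitrary: S rule: less_induct)
  case less
  show ?case
  proof (cases "S = {}")
    case True
    then show ?thesis by (simp add: SC_32_1_sortable_def SC_def motzkin_0 Collect_conv_if)
  next
    case False
    define M where "M = Max S"
    obtain S' where S: "S = insert M S'" "finite S'" "\<forall>x\<in>S'. x < M" "card S = Suc (card S')"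
      using insert_Max_below[OF less.prems False] unfolding M_def by blast
    \<comment> \<open>In \<open>L M R\<close> the larger entries come first, so count the reversed permutations.\<close>
    let ?sortable_rev = "\<lambda>w. \<not> contains_231 (SC contains_32_1 (rev w))"
    have card_rev: "card {w \<in> permutations_of_set T. ?sortable_rev w} = card (SC_32_1_sortable T)" for T
      using card_permutations_rev[of T "\<lambda>w. \<not> contains_231 (SC contains_32_1 w)"]
      by (simp add: SC_32_1_sortable_def)
    have split: "?sortable_rev (xs @ M # ys) \<longleftrightarrow> (\<forall>a\<in>set xs. \<forall>b\<in>set ys. a < b) \<and>
        ?sortable_rev xs \<and> (\<not> contains_32_1 (M # ys) \<and> \<not> contains_231 ys)"
      if "distinct (xs @ ys)" "set (xs @ ys) = S'" for xs ys
      using SC_32_1_avoids_231_iff[of "rev ys" "rev xs" M] that S(3) by auto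
    have "card (SC_32_1_sortable S) = card {w \<in> permutations_of_set S. ?sortable_rev w}"
      by (rule card_rev[symmetric])
    also have "\<dots> = (\<Sum>k\<le>card S'. card {xs \<in> permutations_of_set (lower k S'). ?sortable_rev xs} *
          card {ys \<in> permutations_of_set (upper k S'). \<not> contains_32_1 (M # ys) \<and> \<not> contains_231 ys})"
      unfolding S(1) by (rule card_permutations_split_at_max[OF S(2,3) split])
    also have "\<dots> = (\<Sum>k\<le>card S'. motzkin k * motzkin_primitive (card S' - k))"
    proof (rule sum.cong)
      fix k assume "k \<in> {..card S'}"
      then have "card (lower k S') = k" "card (upper k S') = card S' - k"
        using lower_upper(3,4)[OF S(2)] by simp_all
      moreover have "card (SC_32_1_sortable (lower k S')) = motzkin (card (lower k S'))"
      proof (rule less.hyps)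
        show "finite (lower k S')" by (simp add: lower_def)
        show "card (lower k S') < card S" using \<open>card (lower k S') = k\<close> \<open>k \<in> {..card S'}\<close> S(4) by simp
      qed
      moreover have "\<forall>x\<in>upper k S'. x < M" using lower_upper(1)[OF S(2), of k] S(3) by blast
      ultimately show "card {xs \<in> permutations_of_set (lower k S'). ?sortable_rev xs} *
          card {ys \<in> permutations_of_set (upper k S'). \<not> contains_32_1 (M # ys) \<and> \<not> contains_231 ys} =
          motzkin k * motzkin_primitive (card S' - k)"
        using card_rev[of "lower k S'"] card_perms_after_max[of "upper k S'" M] by (simp add: upper_def)
    qed simp
    finally show ?thesis using S(4) by (simp add: motzkin_Suc)
  qed
qed

lemma Sort_set_32_1_eq: "Sort_set n contains_32_1 = SC_32_1_sortable {1..n}"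
proof -
  have "west_s w = [1..<n + 1] \<longleftrightarrow> \<not> contains_231 w" if "w \<in> permutations_of_set {1..n}" for w
  proof -
    have "distinct (west_s w)" "set (west_s w) = set [1..<n + 1]" "distinct w"
      using that mset_eq_imp_distinct_iff[OF mset_west_s]
      by (auto simp: permutations_of_set_def)
    then have "west_s w = [1..<n + 1] \<longleftrightarrow> sorted (west_s w)"
      by (metis sorted_distinct_set_unique sorted_upt distinct_upt)
    then show ?thesis using sorted_west_s_iff \<open>distinct w\<close> by simp
  qed
  moreover have "SC contains_32_1 \<tau> \<in> permutations_of_set {1..n}"
    if "\<tau> \<in> permutations_of_set {1..n}" for \<tau>
    using that mset_eq_imp_distinct_iff[OF mset_SC] mset_eq_setD[OF mset_SC]
    by (auto simp: permutations_of_set_def)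
  ultimately show ?thesis by (auto simp: Sort_set_def SC_32_1_sortable_def)
qed

theorem mainTheorem6:
  fixes n :: nat
  assumes "n \<ge> 1"
  shows "card (Sort_set n contains_32_1) = motzkin n"
  using card_SC_32_1_sortable[of "{1..n}"] by (simp add: Sort_set_32_1_eq)

end
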